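(* Let $X_0=0$ and $X_n=\sum_{j=1}^{X_{n-1}}\xi_{n,j}+\varepsilon_n$ for $n\ge1$, where $\{\xi_{n,j},\varepsilon_n\}$ are independent nonnegative integer-valued random variables with $\xi_{n,j}$, $j\in\mathbb N$, identically distributed for each $n$. Let $G_n(x)=\mathbb E x^{\xi_{n,1}}$, $H_n(x)=\mathbb E x^{\varepsilon_n}$, $\rho_n=G_n'(1)\le 1$, and $m_{n,1}=\mathbb E\varepsilon_n$. Define $\overline G_{n+1,n}(x)=x$ and $\overline G_{j,n}(x)=G_j(\overline G_{j+1,n}(x))$ for $j\le n$. Assume $\prod_{n=2}^\infty\rho_n=\rho\in(0,1)$ and $\sum_{n=1}^\infty m_{n,1}<\infty$. Then for every $j$ and $x\in[0,1]$ the limit $\overline G_{j+1,\infty}(x)=\lim_{n\to\infty}\overline G_{j+1,n}(x)$ exists, and $X_n$ converges in distribution to a random variable $Y$ with generating function $$g(x)=\prod_{j=1}^\infty H_j\big(\overline G_{j+1,\infty}(x)\big).$$ *)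

theory Defs
  imports "HOL-Probability.Probability"
begin

primrec bpi :: "(nat \<Rightarrow> nat \<Rightarrow> 'a \<Rightarrow> nat) \<Rightarrow> (nat \<Rightarrow> 'a \<Rightarrow> nat) \<Rightarrow> nat \<Rightarrow> 'a \<Rightarrow> nat" where
  "bpi xi eps 0 \<omega> = 0"
| "bpi xi eps (Suc n) \<omega> = (\<Sum>j=1..bpi xi eps n \<omega>. xi (Suc n) j \<omega>) + eps (Suc n) \<omega>"

definition pgf :: "'a measure \<Rightarrow> ('a \<Rightarrow> nat) \<Rightarrow> real \<Rightarrow> real" where
  "pgf M Z x = (\<integral>\<omega>. x ^ Z \<omega> \<partial>M)"

text \<open>Iterated composition: Gbar G j n = G j \<circ> G (j+1) \<circ> ... \<circ> G n;
  in particular Gbar G (n+1) n = id and Gbar G j n = G j \<circ> Gbar G (j+1) n for j \<le> n.\<close>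
definition Gbar :: "(nat \<Rightarrow> real \<Rightarrow> real) \<Rightarrow> nat \<Rightarrow> nat \<Rightarrow> real \<Rightarrow> real" where
  "Gbar G j n = foldr (\<lambda>k f. G k \<circ> f) [j..<Suc n] id"

end

theory Submission
  imports Defs "HOL-Library.Diagonal_Subsequence"
begin

text \<open>
  Conditioning on \<open>X\<^sub>n\<close> and using independence gives the one-step recursion
  \<open>E x^X\<^sub>n\<^sub>+\<^sub>1 = H\<^sub>n\<^sub>+\<^sub>1(x) \<cdot> E (G\<^sub>n\<^sub>+\<^sub>1 x)^X\<^sub>n\<close>, hence the closed form
  \<open>E x^X\<^sub>n = \<Prod>j=1..n. H\<^sub>j(Gbar\<^sub>j\<^sub>+\<^sub>1\<^sub>,\<^sub>n x)\<close>.  Since \<open>G\<^sub>k'(1) \<le> 1\<close>, every \<open>G\<^sub>k\<close> lies above the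
  identity on [0,1], so \<open>n \<mapsto> Gbar\<^sub>j\<^sub>,\<^sub>n x\<close> increases to a limit \<open>\<le> 1\<close>.  Bernoulli's inequality
  gives \<open>H\<^sub>j(y) \<ge> 1 - m\<^sub>j(1 - y)\<close> with summable means \<open>m\<^sub>j\<close>, so the factors of the closed form
  are uniformly close to 1 in the tail; this lets us pass to the limit inside the product
  and shows that the pgfs of \<open>X\<^sub>n\<close> converge to the infinite product \<open>g\<close>, with
  \<open>g(x) \<ge> 1 - (\<Sum>m\<^sub>j)(1 - x)\<close>.  Finally a continuity theorem for generating functions
  (diagonal extraction, uniqueness of power series coefficients, and the lower bound
  preventing loss of mass) turns pointwise convergence of pgfs into convergence of the
  point probabilities to a probability mass function, hence into weak convergence.
\<close>

section \<open>Generating functions of nonnegative integer random variables\<close>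

lemma measurable_nat_fun:
  fixes h :: "nat \<Rightarrow> 'b::topological_space"
  assumes "X \<in> measurable M (count_space UNIV)"
  shows "(\<lambda>\<omega>. h (X \<omega>)) \<in> borel_measurable M"
  using measurable_compose[OF assms, of h borel] by simp

lemma level_set_measurable:
  assumes "X \<in> measurable M (count_space UNIV)"
  shows "{\<omega>\<in>space M. X \<omega> = (k::nat)} \<in> sets M"
proof -
  have "X -` {k} \<inter> space M \<in> sets M" using measurable_sets[OF assms, of "{k}"] by simp
  moreover have "X -` {k} \<inter> space M = {\<omega>\<in>space M. X \<omega> = k}" by auto
  ultimately show ?thesis by simp
qed

lemma nn_integral_nat_decomp:
  assumes X: "X \<in> measurable M (count_space UNIV)"
  shows "(\<integral>\<^sup>+\<omega>. h (X \<omega>) \<partial>M) = (\<Sum>k. emeasure M {\<omega>\<in>space M. X \<omega> = (k::nat)} * h k)"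
proof -
  define A where "A k = {\<omega>\<in>space M. X \<omega> = k}" for k
  have A: "A k \<in> sets M" for k unfolding A_def by (rule level_set_measurable[OF X])
  have "(\<integral>\<^sup>+\<omega>. h (X \<omega>) \<partial>M) = (\<integral>\<^sup>+\<omega>. (\<Sum>k. h k * indicator (A k) \<omega>) \<partial>M)"
  proof (intro nn_integral_cong)
    fix \<omega> assume "\<omega> \<in> space M"
    then have "\<omega> \<in> A (X \<omega>)" by (simp add: A_def)
    moreover have "disjoint_family A" by (auto simp: disjoint_family_on_def A_def)
    ultimately show "h (X \<omega>) = (\<Sum>k. h k * indicator (A k) \<omega>)"
      by (simp add: suminf_cmult_indicator)
  qed
  also have "\<dots> = (\<Sum>k. \<integral>\<^sup>+\<omega>. h k * indicator (A k) \<omega> \<partial>M)"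
    using A by (intro nn_integral_suminf) auto
  also have "\<dots> = (\<Sum>k. emeasure M (A k) * h k)"
    using A by (simp add: nn_integral_cmult_indicator mult.commute)
  finally show ?thesis by (simp add: A_def)
qed

context prob_space begin

lemma pgf_integrable:
  fixes x :: real
  assumes X: "X \<in> measurable M (count_space UNIV)" and x: "0 \<le> x" "x \<le> 1"
  shows "integrable M (\<lambda>\<omega>. x ^ X \<omega>)"
proof (rule integrable_const_bound[where B=1])
  show "AE \<omega> in M. norm (x ^ X \<omega>) \<le> 1"
    using x by (auto intro!: power_le_one simp: power_abs)
qed (rule measurable_nat_fun[OF X])

lemma pgf_nonneg: "0 \<le> x \<Longrightarrow> 0 \<le> pgf M X x"
  unfolding pgf_def by (auto intro!: integral_nonneg_AE)

lemma pgf_one: "pgf M X 1 = 1"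
  unfolding pgf_def by (simp add: prob_space)

lemma pgf_mono:
  assumes X: "X \<in> measurable M (count_space UNIV)" and "0 \<le> x" "x \<le> y" "y \<le> 1"
  shows "pgf M X x \<le> pgf M X y"
  unfolding pgf_def
  using assms by (intro integral_mono pgf_integrable[OF X]) (auto intro: power_mono)

lemma pgf_le_one:
  assumes X: "X \<in> measurable M (count_space UNIV)" and "0 \<le> x" "x \<le> 1"
  shows "pgf M X x \<le> 1"
  using pgf_mono[OF X, of x 1] assms by (simp add: pgf_one)

lemma pgf_nn_integral:
  assumes X: "X \<in> measurable M (count_space UNIV)" and x: "0 \<le> x" "x \<le> 1"
  shows "(\<integral>\<^sup>+\<omega>. ennreal (x ^ X \<omega>) \<partial>M) = ennreal (pgf M X x)"
  unfolding pgf_def using x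
  by (intro nn_integral_eq_integral pgf_integrable[OF X]) auto

lemma pgf_tendsto:
  assumes X: "X \<in> measurable M (count_space UNIV)"
    and y: "\<And>n. 0 \<le> y n" "\<And>n. y n \<le> 1" "y \<longlonglongrightarrow> z"
  shows "(\<lambda>n. pgf M X (y n)) \<longlonglongrightarrow> pgf M X z"
  unfolding pgf_def
proof (rule integral_dominated_convergence[where w="\<lambda>_. 1"])
  show "AE \<omega> in M. (\<lambda>n. y n ^ X \<omega>) \<longlonglongrightarrow> z ^ X \<omega>"
    using y by (auto intro!: tendsto_intros)
  show "\<And>n. AE \<omega> in M. norm (y n ^ X \<omega>) \<le> 1"
    using y by (auto intro!: power_le_one simp: power_abs)
qed (auto intro: measurable_nat_fun[OF X])

text \<open>Bernoulli's inequality in expectation: \<open>E x^X \<ge> 1 - E X \<cdot> (1 - x)\<close>.\<close>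
lemma pgf_ge_mean_bound:
  assumes X: "X \<in> measurable M (count_space UNIV)"
    and int: "integrable M (\<lambda>\<omega>. real (X \<omega>))" and x: "0 \<le> x" "x \<le> 1"
  shows "1 - (\<integral>\<omega>. real (X \<omega>) \<partial>M) * (1 - x) \<le> pgf M X x"
proof -
  have "1 - (\<integral>\<omega>. real (X \<omega>) \<partial>M) * (1 - x) = (\<integral>\<omega>. 1 - real (X \<omega>) * (1 - x) \<partial>M)"
    using int by (subst Bochner_Integration.integral_diff) (auto simp: prob_space)
  also have "\<dots> \<le> pgf M X x"
    unfolding pgf_def
  proof (intro integral_mono pgf_integrable[OF X] x)
    show "integrable M (\<lambda>\<omega>. 1 - real (X \<omega>) * (1 - x))"
      using int by (intro Bochner_Integration.integrable_diff integrable_mult_left) auto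
    fix \<omega> show "1 - real (X \<omega>) * (1 - x) \<le> x ^ X \<omega>"
      using Bernoulli_inequality[of "x - 1" "X \<omega>"] x by (simp add: algebra_simps)
  qed
  finally show ?thesis .
qed

lemma pgf_difference_quotient:
  assumes X: "X \<in> measurable M (count_space UNIV)" and y: "0 \<le> y" "y < 1"
  shows "(1 - pgf M X y) / (1 - y) = (\<integral>\<omega>. (\<Sum>i<X \<omega>. y ^ i) \<partial>M)"
proof -
  have "(\<integral>\<omega>. (\<Sum>i<X \<omega>. y ^ i) \<partial>M) = (\<integral>\<omega>. (1 - y ^ X \<omega>) / (1 - y) \<partial>M)"
    using y by (intro Bochner_Integration.integral_cong) (auto simp: sum_gp_strict)
  also have "\<dots> = (\<integral>\<omega>. (1 - y ^ X \<omega>) \<partial>M) / (1 - y)"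
    by simp
  also have "(\<integral>\<omega>. (1 - y ^ X \<omega>) \<partial>M) = 1 - pgf M X y"
    unfolding pgf_def using y
    by (subst Bochner_Integration.integral_diff) (auto intro!: pgf_integrable[OF X] simp: prob_space)
  finally show ?thesis by simp
qed

lemma pgf_difference_quotient_mono:
  assumes X: "X \<in> measurable M (count_space UNIV)" and y: "0 \<le> a" "a \<le> b" "b < 1"
  shows "(1 - pgf M X a) / (1 - a) \<le> (1 - pgf M X b) / (1 - b)"
proof -
  have int: "integrable M (\<lambda>\<omega>. (\<Sum>i<X \<omega>. c ^ i))" if c: "0 \<le> c" "c < 1" for c :: real
  proof (rule integrable_const_bound[where B="1 / (1 - c)"])
    show "AE \<omega> in M. norm (\<Sum>i<X \<omega>. c ^ i) \<le> 1 / (1 - c)"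
    proof (intro AE_I2)
      fix \<omega>
      have "(\<Sum>i<X \<omega>. c ^ i) = (1 - c ^ X \<omega>) / (1 - c)" using c by (simp add: sum_gp_strict)
      also have "\<dots> \<le> 1 / (1 - c)" using c by (intro divide_right_mono) auto
      finally show "norm (\<Sum>i<X \<omega>. c ^ i) \<le> 1 / (1 - c)"
        using c by (simp add: sum_nonneg)
    qed
  qed (rule measurable_nat_fun[OF X])
  have "(\<integral>\<omega>. (\<Sum>i<X \<omega>. a ^ i) \<partial>M) \<le> (\<integral>\<omega>. (\<Sum>i<X \<omega>. b ^ i) \<partial>M)"
    using y by (intro integral_mono int sum_mono power_mono) auto
  then show ?thesis using pgf_difference_quotient[OF X] y by simp
qed

text \<open>If the left derivative at 1 (the mean) is at most 1, the pgf lies above the diagonal: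
  the increasing difference quotient is bounded by its limit \<open>\<rho> \<le> 1\<close>.\<close>
lemma pgf_ge_diagonal:
  assumes X: "X \<in> measurable M (count_space UNIV)"
    and D: "(pgf M X has_real_derivative \<rho>) (at_left 1)" and \<rho>: "\<rho> \<le> 1"
    and x: "0 \<le> x" "x \<le> 1"
  shows "x \<le> pgf M X x"
proof (cases "x = 1")
  case True then show ?thesis by (simp add: pgf_one)
next
  case False
  with x have x1: "x < 1" by simp
  define \<phi> where "\<phi> y = (1 - pgf M X y) / (1 - y)" for y
  have "((\<lambda>y. (pgf M X y - pgf M X 1) / (y - 1)) \<longlongrightarrow> \<rho>) (at_left 1)"
    using D unfolding has_field_derivative_iff by simp
  moreover have "(pgf M X y - pgf M X 1) / (y - 1) = \<phi> y" for y
    unfolding \<phi>_def pgf_one by (metis minus_diff_eq minus_divide_divide)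
  ultimately have lim: "(\<phi> \<longlongrightarrow> \<rho>) (at_left 1)" by simp
  have "eventually (\<lambda>y. \<phi> x \<le> \<phi> y) (at_left (1::real))"
    using eventually_at_left_real[OF x1]
    by eventually_elim (use x in \<open>auto simp: \<phi>_def intro!: pgf_difference_quotient_mono[OF X]\<close>)
  then have "\<phi> x \<le> \<rho>"
    by (rule tendsto_le[OF trivial_limit_at_left_real lim tendsto_const])
  then have "1 - pgf M X x \<le> \<rho> * (1 - x)" using x1 by (simp add: \<phi>_def field_simps)
  also have "\<dots> \<le> 1 - x" using mult_right_mono[OF \<rho>, of "1 - x"] x1 by simp
  finally show ?thesis by simp
qed

lemma pgf_sums:
  assumes X: "X \<in> measurable M (count_space UNIV)" and x: "0 \<le> x" "x \<le> 1"
  shows "(\<lambda>k. measure M {\<omega>\<in>space M. X \<omega> = k} * x ^ k) sums pgf M X x"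
proof -
  have "ennreal (pgf M X x) = (\<integral>\<^sup>+\<omega>. ennreal (x ^ X \<omega>) \<partial>M)"
    by (rule pgf_nn_integral[OF X x, symmetric])
  also have "\<dots> = (\<Sum>k. emeasure M {\<omega>\<in>space M. X \<omega> = k} * ennreal (x ^ k))"
    by (rule nn_integral_nat_decomp[OF X])
  also have "\<dots> = (\<Sum>k. ennreal (measure M {\<omega>\<in>space M. X \<omega> = k} * x ^ k))"
    using x by (intro suminf_cong) (simp add: emeasure_eq_measure ennreal_mult)
  finally have "(\<lambda>k. ennreal (measure M {\<omega>\<in>space M. X \<omega> = k} * x ^ k)) sums ennreal (pgf M X x)"
    using summable_sums[OF summableI] by simp
  then show ?thesis using x by (subst (asm) sums_ennreal) (auto intro: pgf_nonneg)
qed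

lemma cdf_nat:
  assumes X: "X \<in> measurable M (count_space UNIV)"
  shows "cdf (distr M borel (\<lambda>\<omega>. real (X \<omega>))) y = (\<Sum>k\<in>{k. real k \<le> y}. measure M {\<omega>\<in>space M. X \<omega> = k})"
proof -
  have fin: "finite {k::nat. real k \<le> y}"
  proof (rule finite_subset[of _ "{..nat \<lceil>y\<rceil>}"])
    show "{k::nat. real k \<le> y} \<subseteq> {..nat \<lceil>y\<rceil>}"
    proof
      fix k :: nat assume "k \<in> {k. real k \<le> y}"
      then have "int k \<le> \<lceil>y\<rceil>" by (simp, linarith)
      then show "k \<in> {..nat \<lceil>y\<rceil>}" by simp
    qed
  qed simp
  have "cdf (distr M borel (\<lambda>\<omega>. real (X \<omega>))) y = measure M ((\<lambda>\<omega>. real (X \<omega>)) -` {..y} \<inter> space M)"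
    unfolding cdf_def by (rule measure_distr) (auto intro: measurable_nat_fun[OF X])
  also have "(\<lambda>\<omega>. real (X \<omega>)) -` {..y} \<inter> space M = (\<Union>k\<in>{k. real k \<le> y}. {\<omega>\<in>space M. X \<omega> = k})"
    by auto
  also have "measure M \<dots> = (\<Sum>k\<in>{k. real k \<le> y}. measure M {\<omega>\<in>space M. X \<omega> = k})"
    by (rule finite_measure_finite_Union)
      (auto simp: fin disjoint_family_on_def intro: level_set_measurable[OF X])
  finally show ?thesis .
qed

end

section \<open>Iterated compositions of maps above the diagonal\<close>

text \<open>The relevant properties of a subcritical offspring pgf on [0,1]: it is monotone, maps
  [0,1] into itself and lies above the identity.  They are preserved by composition.\<close>
definition monotone_above_diagonal :: "(real \<Rightarrow> real) \<Rightarrow> bool" where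
  "monotone_above_diagonal f \<longleftrightarrow>
     (\<forall>x y. 0 \<le> x \<longrightarrow> x \<le> y \<longrightarrow> y \<le> 1 \<longrightarrow> x \<le> f x \<and> f x \<le> f y \<and> f y \<le> 1)"

lemma monotone_above_diagonalD:
  assumes "monotone_above_diagonal f" "0 \<le> x" "x \<le> y" "y \<le> 1"
  shows "x \<le> f x" "f x \<le> f y" "f y \<le> 1"
  using assms unfolding monotone_above_diagonal_def by blast+

lemma monotone_above_diagonal_id: "monotone_above_diagonal id"
  by (simp add: monotone_above_diagonal_def)

lemma monotone_above_diagonal_comp:
  assumes f: "monotone_above_diagonal f" and g: "monotone_above_diagonal g"
  shows "monotone_above_diagonal (f \<circ> g)"
  unfolding monotone_above_diagonal_def
proof (intro allI impI)
  fix x y :: real assume xy: "0 \<le> x" "x \<le> y" "y \<le> 1"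
  note gxy = monotone_above_diagonalD[OF g xy]
  have "g x \<le> 1" using gxy by linarith
  then show "x \<le> (f \<circ> g) x \<and> (f \<circ> g) x \<le> (f \<circ> g) y \<and> (f \<circ> g) y \<le> 1"
    using monotone_above_diagonalD[OF f, of "g x" "g y"] gxy xy by auto
qed

lemma foldr_comp_id: "foldr (\<lambda>k f. G k \<circ> f) xs g = foldr (\<lambda>k f. G k \<circ> f) xs id \<circ> g"
  by (induction xs) auto

lemma Gbar_empty: "n < j \<Longrightarrow> Gbar G j n = id"
  unfolding Gbar_def by simp

lemma Gbar_Suc: "j \<le> Suc n \<Longrightarrow> Gbar G j (Suc n) = Gbar G j n \<circ> G (Suc n)"
  unfolding Gbar_def
  by (subst upt_Suc_append) (auto simp: foldr_comp_id[of G _ "G (Suc n)"])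

lemma Gbar_monotone_above_diagonal:
  assumes G: "\<And>k. j \<le> k \<Longrightarrow> monotone_above_diagonal (G k)"
  shows "monotone_above_diagonal (Gbar G j n)"
proof (induction n)
  case 0
  show ?case
    using G[of 0] by (cases j) (auto simp: Gbar_def monotone_above_diagonal_def)
next
  case (Suc n)
  show ?case
  proof (cases "j \<le> Suc n")
    case True
    then show ?thesis
      unfolding Gbar_Suc[OF True] by (intro monotone_above_diagonal_comp Suc.IH G)
  next
    case False
    show ?thesis
      unfolding Gbar_empty[of "Suc n" j G, OF not_le_imp_less[OF False]] by (rule monotone_above_diagonal_id)
  qed
qed

text \<open>For fixed \<open>x\<close>, \<open>n \<mapsto> Gbar G j n x\<close> increases (each added inner map pushes the
  argument up) and is bounded by 1, hence converges.\<close>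
lemma Gbar_limit:
  assumes G: "\<And>k. j \<le> k \<Longrightarrow> monotone_above_diagonal (G k)" and x: "0 \<le> x" "x \<le> 1"
  shows "(\<lambda>n. Gbar G j n x) \<longlonglongrightarrow> lim (\<lambda>n. Gbar G j n x)"
    and "Gbar G j n x \<le> lim (\<lambda>n. Gbar G j n x)"
    and "lim (\<lambda>n. Gbar G j n x) \<le> 1"
proof -
  have mono: "monotone_above_diagonal (Gbar G j m)" for m
    by (rule Gbar_monotone_above_diagonal[OF G])
  note Gbar = monotone_above_diagonalD[OF mono x(1) order.refl x(2)]
  have "incseq (\<lambda>n. Gbar G j n x)"
  proof (rule incseq_SucI)
    fix n show "Gbar G j n x \<le> Gbar G j (Suc n) x"
    proof (cases "j \<le> Suc n")
      case True
      have "x \<le> G (Suc n) x" "G (Suc n) x \<le> 1"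
        using monotone_above_diagonalD[OF G[OF True] x(1) order.refl x(2)] by linarith+
      then show ?thesis using True x by (simp add: Gbar_Suc monotone_above_diagonalD(2)[OF mono])
    qed (simp add: Gbar_empty)
  qed
  moreover have "bdd_above (range (\<lambda>n. Gbar G j n x))"
    using Gbar by (intro bdd_aboveI[where M=1]) auto
  ultimately have lim: "(\<lambda>n. Gbar G j n x) \<longlonglongrightarrow> lim (\<lambda>n. Gbar G j n x)"
    using LIMSEQ_incseq_SUP convergent_LIMSEQ_iff convergent_def by metis
  then show "(\<lambda>n. Gbar G j n x) \<longlonglongrightarrow> lim (\<lambda>n. Gbar G j n x)" .
  show "Gbar G j n x \<le> lim (\<lambda>n. Gbar G j n x)"
    by (rule incseq_le[OF \<open>incseq _\<close> lim])
  show "lim (\<lambda>n. Gbar G j n x) \<le> 1"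
    by (rule LIMSEQ_le_const2[OF lim]) (use Gbar in auto)
qed

section \<open>The generating function of the process\<close>

lemma measurable_add_nat:
  fixes f g :: "'a \<Rightarrow> nat"
  assumes f: "f \<in> measurable M (count_space UNIV)" and g: "g \<in> measurable M (count_space UNIV)"
  shows "(\<lambda>\<omega>. f \<omega> + g \<omega>) \<in> measurable M (count_space UNIV)"
proof -
  have "(\<lambda>\<omega>. (\<lambda>a \<omega>. a + g \<omega>) (f \<omega>) \<omega>) \<in> measurable M (count_space UNIV)"
  proof (rule measurable_compose_countable[OF _ f])
    fix a :: nat show "(\<lambda>\<omega>. a + g \<omega>) \<in> measurable M (count_space UNIV)"
      using measurable_compose[OF g, of "\<lambda>b. a + b" "count_space UNIV"] by simp
  qed
  then show ?thesis by simp
qed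

lemma bpi_cong:
  assumes "\<And>m j. 1 \<le> m \<Longrightarrow> m \<le> n \<Longrightarrow> 1 \<le> j \<Longrightarrow> xi' m j \<omega>' = xi m j \<omega>"
    and "\<And>m. 1 \<le> m \<Longrightarrow> m \<le> n \<Longrightarrow> eps' m \<omega>' = eps m \<omega>"
  shows "bpi xi' eps' n \<omega>' = bpi xi eps n \<omega>"
  using assms
proof (induction n)
  case (Suc n)
  then have "bpi xi' eps' n \<omega>' = bpi xi eps n \<omega>" by simp
  with Suc.prems show ?case by simp
qed simp

lemma bpi_measurable:
  assumes xi: "\<And>m j. 1 \<le> m \<Longrightarrow> m \<le> n \<Longrightarrow> 1 \<le> j \<Longrightarrow> xi m j \<in> measurable N (count_space UNIV)"
    and eps: "\<And>m. 1 \<le> m \<Longrightarrow> m \<le> n \<Longrightarrow> eps m \<in> measurable N (count_space UNIV)"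
  shows "bpi xi eps n \<in> measurable N (count_space UNIV)"
  using assms
proof (induction n)
  case 0
  have "bpi xi eps 0 = (\<lambda>_. 0)" by (rule ext) simp
  then show ?case by simp
next
  case (Suc n)
  have xi: "\<And>j. 1 \<le> j \<Longrightarrow> xi (Suc n) j \<in> measurable N (count_space UNIV)"
    and eps: "eps (Suc n) \<in> measurable N (count_space UNIV)"
    and IH: "bpi xi eps n \<in> measurable N (count_space UNIV)"
    using Suc by auto
  have partial_sums: "(\<lambda>\<omega>. \<Sum>j=1..k. xi (Suc n) j \<omega>) \<in> measurable N (count_space UNIV)" for k
    by (induction k) (simp_all add: measurable_add_nat xi)
  have "(\<lambda>\<omega>. (\<lambda>k \<omega>. (\<Sum>j=1..k. xi (Suc n) j \<omega>) + eps (Suc n) \<omega>) (bpi xi eps n \<omega>) \<omega>)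
     \<in> measurable N (count_space UNIV)"
    by (rule measurable_compose_countable[OF measurable_add_nat[OF partial_sums eps] IH])
  then show ?case by simp
qed

definition bpi_of_family :: "nat \<Rightarrow> ((nat \<times> nat) + nat \<Rightarrow> nat) \<Rightarrow> nat" where
  "bpi_of_family n = bpi (\<lambda>m j f. f (Inl (m, j))) (\<lambda>m f. f (Inr m)) n"

lemma (in prob_space) indep_blocks_nn_integral:
  assumes indep: "indep_vars (\<lambda>_. count_space UNIV) Z I"
    and L: "finite L" and K: "\<And>q. q \<in> L \<Longrightarrow> K q \<subseteq> I" and disj: "disjoint_family_on K L"
    and Y: "\<And>q. q \<in> L \<Longrightarrow> Y q \<in> borel_measurable (PiM (K q) (\<lambda>_. count_space UNIV))"
  shows "(\<integral>\<^sup>+\<omega>. (\<Prod>q\<in>L. Y q (restrict (\<lambda>i. Z i \<omega>) (K q))) \<partial>M)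
       = (\<Prod>q\<in>L. \<integral>\<^sup>+\<omega>. Y q (restrict (\<lambda>i. Z i \<omega>) (K q)) \<partial>M)"
proof -
  have "indep_vars (\<lambda>q. PiM (K q) (\<lambda>_. count_space UNIV)) (\<lambda>q \<omega>. restrict (\<lambda>i. Z i \<omega>) (K q)) L"
    by (rule indep_vars_restrict[OF indep K disj])
  then have "indep_vars (\<lambda>_. borel) (\<lambda>q \<omega>. Y q (restrict (\<lambda>i. Z i \<omega>) (K q))) L"
    by (rule indep_vars_compose2[OF _ Y])
  then show ?thesis by (rule indep_vars_nn_integral[OF L]) simp
qed

text \<open>Splitting a product over the blocks used below: the past, the immigrants and the
  \<open>k\<close> offspring variables of the next generation.\<close>
lemma prod_option_split:
  fixes f :: "nat option \<Rightarrow> 'b::comm_monoid_mult"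
  shows "(\<Prod>q\<in>insert None (Some ` {0..k}). f q) = f None * (f (Some 0) * (\<Prod>j\<in>{1..k}. f (Some j)))"
proof -
  have "insert None (Some ` {0..k}) = insert None (insert (Some 0) (Some ` {1..k}))"
    by (auto simp: image_iff)
  then show ?thesis by (simp add: prod.reindex image_iff)
qed

locale bpi_process = prob_space M for M :: "'a measure" +
  fixes xi :: "nat \<Rightarrow> nat \<Rightarrow> 'a \<Rightarrow> nat" and eps :: "nat \<Rightarrow> 'a \<Rightarrow> nat"
  assumes indep: "indep_vars (\<lambda>_. count_space UNIV)
        (\<lambda>i \<omega>. case i of Inl (n, j) \<Rightarrow> xi n j \<omega> | Inr n \<Rightarrow> eps n \<omega>)
        ({Inl (n, j) | n j. n \<ge> 1 \<and> j \<ge> 1} \<union> {Inr n | n. n \<ge> 1})"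
    and ident: "\<And>n j. n \<ge> 1 \<Longrightarrow> j \<ge> 1 \<Longrightarrow>
        distr M (count_space UNIV) (xi n j) = distr M (count_space UNIV) (xi n 1)"
begin

abbreviation Idx :: "((nat \<times> nat) + nat) set" where
  "Idx \<equiv> {Inl (n, j) | n j. n \<ge> 1 \<and> j \<ge> 1} \<union> {Inr n | n. n \<ge> 1}"

abbreviation Var :: "(nat \<times> nat) + nat \<Rightarrow> 'a \<Rightarrow> nat" where
  "Var \<equiv> \<lambda>i \<omega>. case i of Inl (n, j) \<Rightarrow> xi n j \<omega> | Inr n \<Rightarrow> eps n \<omega>"

abbreviation G :: "nat \<Rightarrow> real \<Rightarrow> real" where
  "G \<equiv> \<lambda>k. pgf M (xi k 1)"

abbreviation H :: "nat \<Rightarrow> real \<Rightarrow> real" where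
  "H \<equiv> \<lambda>k. pgf M (eps k)"

lemma xi_measurable: "n \<ge> 1 \<Longrightarrow> j \<ge> 1 \<Longrightarrow> xi n j \<in> measurable M (count_space UNIV)"
  using indep unfolding indep_vars_def by (drule_tac conjunct1, drule_tac x="Inl (n,j)" in bspec) auto

lemma eps_measurable: "n \<ge> 1 \<Longrightarrow> eps n \<in> measurable M (count_space UNIV)"
  using indep unfolding indep_vars_def by (drule_tac conjunct1, drule_tac x="Inr n" in bspec) auto

lemma X_measurable: "bpi xi eps n \<in> measurable M (count_space UNIV)"
  by (rule bpi_measurable) (auto intro: xi_measurable eps_measurable)

definition Past :: "nat \<Rightarrow> ((nat \<times> nat) + nat) set" where
  "Past n = {i \<in> Idx. case i of Inl (m, j) \<Rightarrow> m \<le> n | Inr m \<Rightarrow> m \<le> n}"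

text \<open>\<open>X\<^sub>n\<close> is a measurable function of the past variables; this is how independence of
  the past from generation \<open>n + 1\<close> enters.\<close>
lemma bpi_of_family_measurable:
  "bpi_of_family n \<in> measurable (PiM (Past n) (\<lambda>_. count_space UNIV)) (count_space UNIV)"
  unfolding bpi_of_family_def
  by (rule bpi_measurable) (auto simp: Past_def intro!: measurable_component_singleton)

lemma X_eq_bpi_of_family: "bpi xi eps n \<omega> = bpi_of_family n (restrict (\<lambda>i. Var i \<omega>) (Past n))"
  unfolding bpi_of_family_def by (rule bpi_cong[symmetric]) (auto simp: Past_def)

lemma nn_integral_offspring:
  assumes "n \<ge> 1" "j \<ge> 1" "0 \<le> z" "z \<le> 1"
  shows "(\<integral>\<^sup>+\<omega>. ennreal (z ^ xi n j \<omega>) \<partial>M) = ennreal (G n z)"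
proof -
  have "(\<integral>\<^sup>+\<omega>. ennreal (z ^ xi n j \<omega>) \<partial>M) = (\<integral>\<^sup>+x. ennreal (z ^ x) \<partial>distr M (count_space UNIV) (xi n j))"
    using assms by (subst nn_integral_distr) (auto intro: xi_measurable)
  also have "\<dots> = (\<integral>\<^sup>+x. ennreal (z ^ x) \<partial>distr M (count_space UNIV) (xi n 1))"
    using ident[of n j] assms by simp
  also have "\<dots> = (\<integral>\<^sup>+\<omega>. ennreal (z ^ xi n 1 \<omega>) \<partial>M)"
    using assms by (subst nn_integral_distr) (auto intro: xi_measurable)
  finally show ?thesis
    using assms by (simp add: pgf_nn_integral xi_measurable)
qed

text \<open>The key independence computation: the event \<open>{X\<^sub>n = k}\<close>, the immigrants
  \<open>\<epsilon>\<^sub>n\<^sub>+\<^sub>1\<close> and the offspring \<open>\<xi>\<^sub>n\<^sub>+\<^sub>1\<^sub>,\<^sub>1, \<dots>, \<xi>\<^sub>n\<^sub>+\<^sub>1\<^sub>,\<^sub>k\<close> are independent.\<close>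
lemma nn_integral_next_generation:
  assumes z: "0 \<le> z" "z \<le> 1"
  shows "(\<integral>\<^sup>+\<omega>. indicator {\<omega>\<in>space M. bpi xi eps n \<omega> = k} \<omega> *
      ((\<Prod>j\<in>{1..k}. ennreal (z ^ xi (Suc n) j \<omega>)) * ennreal (z ^ eps (Suc n) \<omega>)) \<partial>M)
   = emeasure M {\<omega>\<in>space M. bpi xi eps n \<omega> = k} * (ennreal (G (Suc n) z) ^ k * ennreal (H (Suc n) z))"
proof -
  define coord where "coord j = (if j = 0 then Inr (Suc n) else Inl (Suc n, j))" for j :: nat
  define K where "K q = (case q of None \<Rightarrow> Past n | Some j \<Rightarrow> {coord j})" for q
  define Y where "Y q f = (case q of None \<Rightarrow> indicator {k} (bpi_of_family n f)
     | Some j \<Rightarrow> ennreal (z ^ f (coord j)))" for q and f :: "(nat \<times> nat) + nat \<Rightarrow> nat"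
  define L where "L = insert None (Some ` {0..k})"
  define A where "A = {\<omega>\<in>space M. bpi xi eps n \<omega> = k}"
  have K: "K q \<subseteq> Idx" if "q \<in> L" for q
    using that unfolding L_def by (cases q) (auto simp: K_def Past_def coord_def)
  have disj: "disjoint_family_on K L"
    unfolding disjoint_family_on_def L_def
    by (auto simp: K_def Past_def coord_def split: option.splits)
  have Y: "Y q \<in> borel_measurable (PiM (K q) (\<lambda>_. count_space UNIV))" for q
  proof (cases q)
    case None
    then show ?thesis
      using measurable_compose[OF bpi_of_family_measurable, of "indicator {k} :: nat \<Rightarrow> ennreal" borel]
      by (simp add: K_def Y_def[abs_def])
  next
    case (Some j)
    have "(\<lambda>f. f (coord j)) \<in> measurable (PiM (K q) (\<lambda>_. count_space UNIV)) (count_space UNIV)"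
      by (simp add: K_def Some)
    from measurable_nat_fun[OF this, of "\<lambda>x. ennreal (z ^ x)"] show ?thesis
      by (simp add: Y_def[abs_def] Some)
  qed
  note L_split = prod_option_split[where k=k, folded L_def]
  have Y_Var: "Y None (restrict (\<lambda>i. Var i \<omega>) (K None)) = indicator A \<omega>"
    "Y (Some 0) (restrict (\<lambda>i. Var i \<omega>) (K (Some 0))) = ennreal (z ^ eps (Suc n) \<omega>)"
    "j \<in> {1..k} \<Longrightarrow> Y (Some j) (restrict (\<lambda>i. Var i \<omega>) (K (Some j))) = ennreal (z ^ xi (Suc n) j \<omega>)"
    if "\<omega> \<in> space M" for j \<omega>
    using that by (simp_all add: Y_def K_def A_def coord_def X_eq_bpi_of_family[symmetric] indicator_def)
  have "(\<integral>\<^sup>+\<omega>. indicator A \<omega> *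
      ((\<Prod>j\<in>{1..k}. ennreal (z ^ xi (Suc n) j \<omega>)) * ennreal (z ^ eps (Suc n) \<omega>)) \<partial>M)
    = (\<integral>\<^sup>+\<omega>. (\<Prod>q\<in>L. Y q (restrict (\<lambda>i. Var i \<omega>) (K q))) \<partial>M)"
    by (intro nn_integral_cong) (simp add: L_split Y_Var mult_ac)
  also have "\<dots> = (\<Prod>q\<in>L. \<integral>\<^sup>+\<omega>. Y q (restrict (\<lambda>i. Var i \<omega>) (K q)) \<partial>M)"
    by (rule indep_blocks_nn_integral[OF indep _ K disj Y]) (simp add: L_def)
  also have "\<dots> = (\<integral>\<^sup>+\<omega>. indicator A \<omega> \<partial>M) * ((\<integral>\<^sup>+\<omega>. ennreal (z ^ eps (Suc n) \<omega>) \<partial>M) *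
       (\<Prod>j\<in>{1..k}. \<integral>\<^sup>+\<omega>. ennreal (z ^ xi (Suc n) j \<omega>) \<partial>M))"
    unfolding L_split
    by (intro arg_cong2[where f="(*)"] nn_integral_cong prod.cong refl) (simp_all add: Y_Var)
  also have "\<dots> = emeasure M A * (ennreal (H (Suc n) z) * ennreal (G (Suc n) z) ^ k)"
    using z level_set_measurable[OF X_measurable]
    by (simp add: A_def nn_integral_offspring pgf_nn_integral eps_measurable)
  finally show ?thesis by (simp add: A_def mult_ac)
qed

lemma pgf_next_generation:
  assumes z: "0 \<le> z" "z \<le> 1"
  shows "pgf M (bpi xi eps (Suc n)) z = H (Suc n) z * pgf M (bpi xi eps n) (G (Suc n) z)"
proof -
  define g h where "g = G (Suc n) z" and "h = H (Suc n) z"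
  have g: "0 \<le> g" "g \<le> 1" using z by (auto simp: g_def intro!: pgf_nonneg pgf_le_one xi_measurable)
  have h: "0 \<le> h" using z by (auto simp: h_def intro!: pgf_nonneg)
  define A where "A k = {\<omega>\<in>space M. bpi xi eps n \<omega> = k}" for k
  define T where "T k \<omega> = (\<Prod>j\<in>{1..k}. ennreal (z ^ xi (Suc n) j \<omega>)) * ennreal (z ^ eps (Suc n) \<omega>)"
    for k \<omega>
  have T_measurable: "(\<lambda>\<omega>. indicator (A k) \<omega> * T k \<omega>) \<in> borel_measurable M" for k
  proof -
    have "A k \<in> sets M" unfolding A_def by (rule level_set_measurable[OF X_measurable])
    moreover have "(\<lambda>\<omega>. ennreal (z ^ xi (Suc n) j \<omega>)) \<in> borel_measurable M" if "j \<in> {1..k}" for j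
      using that by (intro measurable_nat_fun xi_measurable) auto
    moreover have "(\<lambda>\<omega>. ennreal (z ^ eps (Suc n) \<omega>)) \<in> borel_measurable M"
      by (intro measurable_nat_fun eps_measurable) auto
    ultimately show ?thesis unfolding T_def by measurable
  qed
  have decompose: "ennreal (z ^ bpi xi eps (Suc n) \<omega>) = (\<Sum>k. indicator (A k) \<omega> * T k \<omega>)"
    if "\<omega> \<in> space M" for \<omega>
  proof -
    have "(\<Sum>k. indicator (A k) \<omega> * T k \<omega>) = (\<Sum>k\<in>{bpi xi eps n \<omega>}. indicator (A k) \<omega> * T k \<omega>)"
      by (rule suminf_finite) (auto simp: A_def)
    also have "\<dots> = ennreal (z ^ bpi xi eps (Suc n) \<omega>)"
      using that z by (simp add: A_def T_def power_add power_sum prod_ennreal ennreal_mult prod_nonneg)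
    finally show ?thesis by simp
  qed
  have "ennreal (pgf M (bpi xi eps (Suc n)) z) = (\<integral>\<^sup>+\<omega>. ennreal (z ^ bpi xi eps (Suc n) \<omega>) \<partial>M)"
    by (rule pgf_nn_integral[OF X_measurable z, symmetric])
  also have "\<dots> = (\<integral>\<^sup>+\<omega>. (\<Sum>k. indicator (A k) \<omega> * T k \<omega>) \<partial>M)"
    by (intro nn_integral_cong) (rule decompose)
  also have "\<dots> = (\<Sum>k. \<integral>\<^sup>+\<omega>. indicator (A k) \<omega> * T k \<omega> \<partial>M)"
    by (intro nn_integral_suminf T_measurable)
  also have "\<dots> = (\<Sum>k. ennreal h * (emeasure M (A k) * ennreal (g ^ k)))"
    unfolding A_def T_def g_def h_def nn_integral_next_generation[OF z]
    by (intro suminf_cong) (simp add: ennreal_power pgf_nonneg z mult_ac)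
  also have "\<dots> = ennreal h * (\<integral>\<^sup>+\<omega>. ennreal (g ^ bpi xi eps n \<omega>) \<partial>M)"
    unfolding A_def nn_integral_nat_decomp[OF X_measurable, of "\<lambda>k. ennreal (g ^ k)"] by simp
  also have "\<dots> = ennreal (h * pgf M (bpi xi eps n) g)"
    using g h by (simp add: pgf_nn_integral X_measurable ennreal_mult pgf_nonneg)
  finally have "ennreal (pgf M (bpi xi eps (Suc n)) z) = ennreal (h * pgf M (bpi xi eps n) g)" .
  moreover have "0 \<le> h * pgf M (bpi xi eps n) g" using g h by (simp add: pgf_nonneg)
  ultimately show ?thesis
    unfolding g_def h_def using pgf_nonneg[OF z(1)] by (metis ennreal_inj)
qed

lemma pgf_X_closed_form:
  assumes "0 \<le> z" "z \<le> 1"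
  shows "pgf M (bpi xi eps n) z = (\<Prod>j=1..n. H j (Gbar G (j + 1) n z))"
  using assms
proof (induction n arbitrary: z)
  case 0
  show ?case unfolding pgf_def by (simp add: prob_space)
next
  case (Suc n)
  have g: "0 \<le> G (Suc n) z" "G (Suc n) z \<le> 1"
    using Suc.prems by (auto intro!: pgf_nonneg pgf_le_one xi_measurable)
  have "pgf M (bpi xi eps (Suc n)) z = H (Suc n) z * pgf M (bpi xi eps n) (G (Suc n) z)"
    by (rule pgf_next_generation[OF Suc.prems])
  also have "pgf M (bpi xi eps n) (G (Suc n) z) = (\<Prod>j=1..n. H j (Gbar G (j + 1) (Suc n) z))"
    unfolding Suc.IH[OF g] by (intro prod.cong refl) (simp add: Gbar_Suc)
  also have "H (Suc n) z = H (Suc n) (Gbar G (Suc n + 1) (Suc n) z)"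
    by (simp add: Gbar_empty)
  finally show ?case by (simp add: prod.cl_ivl_Suc mult.commute)
qed

end

section \<open>Products of factors close to one\<close>

lemma prod_ge_one_minus_sum:
  fixes e t :: "'i \<Rightarrow> real"
  assumes "finite A" and "\<And>j. j \<in> A \<Longrightarrow> 0 \<le> e j \<and> e j \<le> 1 \<and> 1 - t j \<le> e j \<and> 0 \<le> t j"
  shows "1 - (\<Sum>j\<in>A. t j) \<le> (\<Prod>j\<in>A. e j)"
  using assms
proof (induction A rule: finite_induct)
  case (insert a A)
  define P S where "P = (\<Prod>j\<in>A. e j)" and "S = (\<Sum>j\<in>A. t j)"
  have IH: "1 - S \<le> P" using insert by (simp add: P_def S_def)
  have P: "0 \<le> P" "P \<le> 1" using insert by (auto simp: P_def intro: prod_nonneg prod_le_1)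
  have S: "0 \<le> S" using insert by (auto simp: S_def intro: sum_nonneg)
  have ea: "0 \<le> e a" "e a \<le> 1" "1 - t a \<le> e a" "0 \<le> t a" using insert by auto
  have "1 - (t a + S) \<le> e a * P"
  proof (cases "S \<le> 1")
    case True
    have "1 - (t a + S) \<le> (1 - t a) * (1 - S)" using ea S by (simp add: algebra_simps)
    also have "\<dots> \<le> e a * (1 - S)" using True ea by (intro mult_right_mono) auto
    also have "\<dots> \<le> e a * P" using IH ea by (intro mult_left_mono) auto
    finally show ?thesis .
  qed (use ea P in \<open>auto intro: order.trans[OF _ mult_nonneg_nonneg]\<close>)
  then show ?case using insert by (simp add: P_def S_def)
qed simp

lemma prod_tail_bound:
  fixes c t :: "nat \<Rightarrow> real"
  assumes n: "N \<le> n" and c: "\<And>j. j \<in> {1..n} \<Longrightarrow> 0 \<le> c j \<and> c j \<le> 1 \<and> 1 - t j \<le> c j"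
    and t: "\<And>j. 0 \<le> t j" "summable t"
  shows "(\<Prod>j=1..N. c j) - (\<Sum>i. t (i + Suc N)) \<le> (\<Prod>j=1..n. c j)"
proof -
  define \<tau> where "\<tau> = (\<Sum>i. t (i + Suc N))"
  have \<tau>: "0 \<le> \<tau>" unfolding \<tau>_def using t by (intro suminf_nonneg summable_ignore_initial_segment) auto
  have head: "0 \<le> (\<Prod>j=1..N. c j)" "(\<Prod>j=1..N. c j) \<le> 1"
    using c n by (auto intro!: prod_nonneg prod_le_1)
  have tail: "(\<Sum>j=Suc N..n. t j) \<le> \<tau>"
  proof (cases "Suc N \<le> n")
    case True
    then have "(\<Sum>j=Suc N..n. t j) = (\<Sum>i=0..n - Suc N. t (i + Suc N))"
      by (intro sum.reindex_bij_witness[where j="\<lambda>j. j - Suc N" and i="\<lambda>i. i + Suc N"]) auto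
    also have "\<dots> \<le> \<tau>" unfolding \<tau>_def
      using t by (intro sum_le_suminf summable_ignore_initial_segment) auto
    finally show ?thesis .
  qed (use \<tau> in simp)
  have "1 - \<tau> \<le> (\<Prod>j=Suc N..n. c j)"
    using prod_ge_one_minus_sum[of "{Suc N..n}" c t] c t(1) tail by force
  then have "(\<Prod>j=1..N. c j) * (1 - \<tau>) \<le> (\<Prod>j=1..N. c j) * (\<Prod>j=Suc N..n. c j)"
    using head by (intro mult_left_mono)
  moreover have "(\<Prod>j=1..N. c j) - \<tau> \<le> (\<Prod>j=1..N. c j) * (1 - \<tau>)"
    using head \<tau> by (simp add: algebra_simps mult_left_le)
  ultimately have "(\<Prod>j=1..N. c j) - \<tau> \<le> (\<Prod>j=1..N. c j) * (\<Prod>j=Suc N..n. c j)"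
    by linarith
  also have "\<dots> = (\<Prod>j=1..n. c j)"
    using n by (subst prod.union_disjoint[symmetric]) (auto intro!: prod.cong)
  finally show ?thesis by (simp add: \<tau>_def)
qed

lemma prod_limit:
  fixes c :: "nat \<Rightarrow> nat \<Rightarrow> real" and b t :: "nat \<Rightarrow> real"
  assumes c: "\<And>j n. 1 \<le> j \<Longrightarrow> j \<le> n \<Longrightarrow> 0 \<le> c j n \<and> c j n \<le> b j \<and> 1 - t j \<le> c j n"
    and b1: "\<And>j. 1 \<le> j \<Longrightarrow> b j \<le> 1" and t: "\<And>j. 0 \<le> t j" "summable t"
    and lim: "\<And>j. 1 \<le> j \<Longrightarrow> (\<lambda>n. c j n) \<longlonglongrightarrow> b j"
  shows "(\<lambda>N. \<Prod>j=1..N. b j) \<longlonglongrightarrow> (INF N. \<Prod>j=1..N. b j)"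
    and "(\<lambda>n. \<Prod>j=1..n. c j n) \<longlonglongrightarrow> (INF N. \<Prod>j=1..N. b j)"
proof -
  define Pb where "Pb N = (\<Prod>j=1..N. b j)" for N
  define P where "P = (INF N. Pb N)"
  have b0: "0 \<le> b j" if "1 \<le> j" for j using c[of j j] that by auto
  have dec: "decseq Pb"
    using b0 b1 by (intro decseq_SucI) (auto simp: Pb_def prod.cl_ivl_Suc intro!: mult_left_le prod_nonneg)
  have bdd: "bdd_below (range Pb)"
    using b0 by (auto intro!: bdd_belowI[where m=0] prod_nonneg simp: Pb_def)
  have PbP: "Pb \<longlonglongrightarrow> P" unfolding P_def by (rule LIMSEQ_decseq_INF[OF bdd dec])
  then show "(\<lambda>N. \<Prod>j=1..N. b j) \<longlonglongrightarrow> (INF N. \<Prod>j=1..N. b j)"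
    by (simp add: Pb_def[abs_def] P_def)
  show "(\<lambda>n. \<Prod>j=1..n. c j n) \<longlonglongrightarrow> (INF N. \<Prod>j=1..N. b j)"
    unfolding Pb_def[symmetric] P_def[symmetric]
  proof (rule LIMSEQ_I)
    fix r :: real assume r: "0 < r"
    obtain N where N: "\<forall>n\<ge>N. norm (\<Sum>i. t (i + n)) < r / 2"
      using suminf_exist_split[of "r/2" t] r t by auto
    have "(\<lambda>n. \<Prod>j=1..N. c j n) \<longlonglongrightarrow> Pb N"
      unfolding Pb_def by (intro tendsto_prod lim) auto
    then have "eventually (\<lambda>n. Pb N - r / 2 < (\<Prod>j=1..N. c j n)) sequentially"
      using r by (auto dest!: order_tendstoD(1)[where a="Pb N - r/2"])
    moreover have "eventually (\<lambda>n. Pb n < P + r) sequentially"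
      using order_tendstoD(2)[OF PbP, of "P + r"] r by auto
    ultimately have "eventually (\<lambda>n. norm ((\<Prod>j=1..n. c j n) - P) < r) sequentially"
      using eventually_ge_at_top[of N]
    proof eventually_elim
      case (elim n)
      have "(\<Prod>j=1..N. c j n) - (\<Sum>i. t (i + Suc N)) \<le> (\<Prod>j=1..n. c j n)"
        using c b1 elim by (intro prod_tail_bound t) (auto intro: order.trans)
      moreover have "(\<Sum>i. t (i + Suc N)) < r / 2" using N[rule_format, of "Suc N"] by simp
      moreover have "P \<le> Pb N" unfolding P_def by (rule cINF_lower[OF bdd]) simp
      moreover have "(\<Prod>j=1..n. c j n) \<le> Pb n"
        unfolding Pb_def using c by (intro prod_mono) auto
      ultimately show ?case using elim by (simp add: abs_less_iff)
    qed
    then show "\<exists>no. \<forall>n\<ge>no. norm ((\<Prod>j=1..n. c j n) - P) < r"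
      by (simp add: eventually_sequentially)
  qed
qed

section \<open>A continuity theorem for generating functions\<close>

lemma bounded_double_sequence_diagonal:
  fixes u :: "nat \<Rightarrow> nat \<Rightarrow> real"
  assumes bdd: "\<And>n k. \<bar>u n k\<bar> \<le> B"
  shows "\<exists>d. strict_mono d \<and> (\<forall>k. convergent (\<lambda>n. u (d n) k))"
proof -
  let ?P = "\<lambda>k. \<lambda>s. convergent (\<lambda>n. u (s n) k)"
  interpret nat: subseqs ?P
  proof (unfold convergent_def, unfold subseqs_def, auto)
    fix k :: nat and s :: "nat \<Rightarrow> nat" assume s: "strict_mono s"
    have "bounded {-B..B}"
      using bounded_closed_interval by auto
    moreover have "\<And>n. u (s n) k \<in> {-B..B}"
      using bdd by (simp add: abs_le_iff minus_le_iff)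
    ultimately have "\<exists>l s'. strict_mono s' \<and> ((\<lambda>n. u (s n) k) \<circ> s') \<longlonglongrightarrow> l"
      using compact_Icc compact_imp_seq_compact seq_compactE by metis
    thus "\<exists>s'. strict_mono (s'::nat\<Rightarrow>nat) \<and> (\<exists>l. (\<lambda>n. u (s (s' n)) k) \<longlonglongrightarrow> l)"
      by (auto simp: comp_def)
  qed
  define d where "d = nat.diagseq"
  have subseq: "strict_mono d"
    unfolding d_def using nat.subseq_diagseq by auto
  have cnv: "?P k d" for k
  proof -
    have Pn_seqseq: "?P k (nat.seqseq (Suc k))"
      by (rule nat.seqseq_holds)
    have 1: "(\<lambda>n. u ((nat.seqseq (Suc k) \<circ> (\<lambda>n. nat.fold_reduce (Suc k) n
      (Suc k + n))) n) k) = (\<lambda>n. u (nat.seqseq (Suc k) n) k) \<circ>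
      (\<lambda>n. nat.fold_reduce (Suc k) n (Suc k + n))"
      by auto
    have 2: "?P k (d \<circ> ((+) (Suc k)))"
      unfolding d_def nat.diagseq_seqseq 1
      by (intro convergent_subseq_convergent Pn_seqseq nat.subseq_diagonal_rest)
    then obtain L where 3: "(\<lambda>n. u (d (n + Suc k)) k) \<longlonglongrightarrow> L"
      by (auto simp: add.commute dest: convergentD)
    then have "(\<lambda>n. u (d n) k) \<longlonglongrightarrow> L"
      by (rule LIMSEQ_offset)
    then show ?thesis
      by (auto simp: convergent_def)
  qed
  show ?thesis using subseq cnv by blast
qed

lemma power_series_zero_coefficients:
  fixes d :: "nat \<Rightarrow> real"
  assumes s: "\<And>x. 0 < x \<Longrightarrow> x < 1 \<Longrightarrow> (\<lambda>k. d k * x ^ k) sums 0"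
    and b: "\<And>k. \<bar>d k\<bar> \<le> 1"
  shows "d k = 0"
proof (induction k rule: less_induct)
  case (less m)
  text \<open>With the lower coefficients zero, \<open>d\<^sub>m = - \<Sum>i>0. d\<^sub>m\<^sub>+\<^sub>i x^i\<close> is at most \<open>x/(1-x)\<close>
    in absolute value.\<close>
  have bound: "\<bar>d m\<bar> \<le> x / (1 - x)" if x: "0 < x" "x < 1" for x
  proof -
    have "(\<lambda>i. d (i + m) * x ^ (i + m)) sums 0"
      using sums_iff_shift[of "\<lambda>k. d k * x ^ k" m 0] s[OF x] less by simp
    then have "(\<lambda>i. inverse (x ^ m) * (d (i + m) * x ^ (i + m))) sums 0"
      using sums_mult[of _ 0 "inverse (x ^ m)"] by simp
    moreover have "inverse (x ^ m) * (d (i + m) * x ^ (i + m)) = d (i + m) * x ^ i" for i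
      using x by (simp add: power_add field_simps)
    ultimately have "(\<lambda>i. d (i + m) * x ^ i) sums 0" by simp
    then have tail: "(\<lambda>i. d (Suc i + m) * x ^ Suc i) sums (- d m)"
      using sums_Suc_iff[of "\<lambda>i. d (i + m) * x ^ i" "- d m"] by simp
    have geo: "(\<lambda>i. x ^ Suc i) sums (x / (1 - x))"
      using sums_mult[OF geometric_sums[of x], of x] x by (simp add: field_simps)
    have term_bound: "\<bar>d (Suc i + m) * x ^ Suc i\<bar> \<le> x ^ Suc i" for i
      using mult_right_mono[of "\<bar>d (Suc i + m)\<bar>" 1 "x ^ Suc i"] b[of "Suc i + m"] x
      by (simp add: abs_mult)
    have "- d m \<le> x / (1 - x)"
      by (rule sums_le[OF _ tail geo]) (use term_bound in \<open>simp add: abs_le_iff\<close>)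
    moreover have "- (- d m) \<le> x / (1 - x)"
      by (rule sums_le[OF _ sums_minus[OF tail] geo]) (use term_bound in \<open>simp add: abs_le_iff\<close>)
    ultimately show ?thesis by linarith
  qed
  show "d m = 0"
  proof (rule ccontr)
    assume ne: "d m \<noteq> 0"
    define x where "x = \<bar>d m\<bar> / 3"
    have x: "0 < x" "x < 1" using ne b[of m] by (auto simp: x_def)
    have "d m * d m \<le> \<bar>d m\<bar>"
      using mult_right_mono[of "\<bar>d m\<bar>" 1 "\<bar>d m\<bar>"] b[of m] by (simp add: abs_mult[symmetric])
    then have "x / (1 - x) \<le> \<bar>d m\<bar> / 2" using x b[of m] by (simp add: x_def field_simps)
    moreover have "0 < \<bar>d m\<bar>" using ne by simp
    ultimately show False using bound[OF x] by linarith
  qed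
qed

lemma sum_le_one_if_sums_one:
  fixes f :: "nat \<Rightarrow> real"
  assumes "\<And>k. 0 \<le> f k" "f sums 1" "finite A"
  shows "sum f A \<le> 1"
  using sum_le_suminf[of f A] assms by (simp add: sums_iff)

lemma subsequential_limit_pmf:
  fixes p :: "nat \<Rightarrow> nat \<Rightarrow> real" and b :: "nat \<Rightarrow> real"
  assumes p0: "\<And>n k. 0 \<le> p n k" and psum: "\<And>n. (\<lambda>k. p n k) sums 1"
    and conv: "\<And>x. 0 \<le> x \<Longrightarrow> x \<le> 1 \<Longrightarrow> (\<lambda>n. \<Sum>k. p n k * x ^ k) \<longlonglongrightarrow> g x"
    and s: "strict_mono s" and lim: "\<And>k. (\<lambda>n. p (s n) k) \<longlonglongrightarrow> b k"
  shows "\<And>k. 0 \<le> b k \<and> b k \<le> 1" and "summable b" and "suminf b \<le> 1"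
    and "\<And>x. 0 \<le> x \<Longrightarrow> x < 1 \<Longrightarrow> (\<lambda>k. b k * x ^ k) sums g x"
proof -
  have p1: "p n k \<le> 1" for n k
    using sum_le_one_if_sums_one[OF p0 psum, of "{k}"] by simp
  show b01: "0 \<le> b k \<and> b k \<le> 1" for k
    using LIMSEQ_le_const[OF lim[of k]] LIMSEQ_le_const2[OF lim[of k]] p0 p1 by auto
  have partial: "sum b {..<N} \<le> 1" for N
    by (rule LIMSEQ_le_const2[OF tendsto_sum[OF lim]])
      (use sum_le_one_if_sums_one[OF p0 psum] in auto)
  show sb: "summable b" using b01 partial by (intro summableI_nonneg_bounded) auto
  show "suminf b \<le> 1" using partial by (intro suminf_le_const sb)
  fix x :: real assume x: "0 \<le> x" "x < 1"
  have T: "eventually (\<lambda>n. summable (\<lambda>k. norm (p (s n) k * x ^ k))) sequentially \<and>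
           summable (\<lambda>k. norm (b k * x ^ k)) \<and>
           ((\<lambda>n. suminf (\<lambda>k. p (s n) k * x ^ k)) \<longlonglongrightarrow> suminf (\<lambda>k. b k * x ^ k))"
  proof (rule tannerys_theorem[where M="\<lambda>k. x ^ k"])
    show "\<forall>\<^sub>F (k, n) in at_top \<times>\<^sub>F sequentially. norm (p (s n) k * x ^ k) \<le> x ^ k"
    proof (rule always_eventually, safe)
      fix k n
      have "\<bar>p (s n) k\<bar> * \<bar>x ^ k\<bar> \<le> 1 * \<bar>x ^ k\<bar>"
        using p0 p1 by (intro mult_right_mono) auto
      then show "norm (p (s n) k * x ^ k) \<le> x ^ k" using x by (simp add: abs_mult)
    qed
    show "\<And>k. (\<lambda>n. p (s n) k * x ^ k) \<longlonglongrightarrow> b k * x ^ k" by (intro tendsto_intros lim)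
    show "summable (\<lambda>k. x ^ k)" using x by (intro summable_geometric) auto
  qed simp
  have "(\<lambda>n. \<Sum>k. p (s n) k * x ^ k) \<longlonglongrightarrow> g x"
    using LIMSEQ_subseq_LIMSEQ[OF conv[of x] s] x by (simp add: o_def)
  then have "suminf (\<lambda>k. b k * x ^ k) = g x" using T by (intro LIMSEQ_unique) auto
  moreover have "summable (\<lambda>k. b k * x ^ k)" using T summable_norm_cancel[of "\<lambda>k. b k * x ^ k"] by simp
  ultimately show "(\<lambda>k. b k * x ^ k) sums g x" by (simp add: sums_iff)
qed

lemma subsubseq_tendsto:
  fixes X :: "nat \<Rightarrow> 'a::metric_space"
  assumes "\<And>s :: nat \<Rightarrow> nat. strict_mono s \<Longrightarrow> \<exists>r :: nat \<Rightarrow> nat. strict_mono r \<and> (X \<circ> s \<circ> r) \<longlonglongrightarrow> L"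
  shows "X \<longlonglongrightarrow> L"
proof (rule ccontr)
  assume "\<not> X \<longlonglongrightarrow> L"
  then obtain \<epsilon> where "\<epsilon> > 0" and "infinite {n. \<not> dist (X n) L < \<epsilon>}"
    by (auto simp: tendsto_iff not_eventually INFM_iff_infinite cofinite_eq_sequentially[symmetric])
  then obtain s :: "nat \<Rightarrow> nat" where s: "\<And>n. \<not> dist (X (s n)) L < \<epsilon>" and "strict_mono s"
    using enumerate_in_set enumerate_mono by (fastforce simp: strict_mono_def)
  then obtain r where "strict_mono r" "(X \<circ> s \<circ> r) \<longlonglongrightarrow> L" using assms[OF \<open>strict_mono s\<close>] by blast
  then have "eventually (\<lambda>n. dist ((X \<circ> s \<circ> r) n) L < \<epsilon>) sequentially"
    using \<open>\<epsilon> > 0\<close> by (intro tendstoD)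
  then show False using s by (auto simp: eventually_sequentially)
qed

lemma no_mass_loss:
  fixes a :: "nat \<Rightarrow> real"
  assumes a: "\<And>k. 0 \<le> a k" "summable a" "suminf a \<le> 1"
    and g: "\<And>x. 0 \<le> x \<Longrightarrow> x < 1 \<Longrightarrow> (\<lambda>k. a k * x ^ k) sums g x"
    and lower: "\<And>x. 0 \<le> x \<Longrightarrow> x < 1 \<Longrightarrow> 1 - C * (1 - x) \<le> g x"
  shows "suminf a = 1"
proof -
  have "eventually (\<lambda>x. x \<in> {0<..<1}) (at_left (1::real))"
    by (rule eventually_at_left_real) simp
  then have "eventually (\<lambda>x. 1 - C * (1 - x) \<le> suminf a) (at_left (1::real))"
  proof eventually_elim
    case (elim x)
    have "g x \<le> suminf a"
      using elim a by (intro sums_le[OF _ g summable_sums]) (auto intro!: mult_right_le_one_le power_le_one)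
    then show ?case using lower[of x] elim by simp
  qed
  moreover have "((\<lambda>x. 1 - C * (1 - x)) \<longlongrightarrow> 1) (at_left (1::real))"
    by (auto intro!: tendsto_eq_intros)
  ultimately have "1 \<le> suminf a"
    by (intro tendsto_le[OF trivial_limit_at_left_real tendsto_const])
  then show ?thesis using a(3) by simp
qed

lemma pgf_continuity:
  fixes p :: "nat \<Rightarrow> nat \<Rightarrow> real" and g :: "real \<Rightarrow> real" and C :: real
  assumes p0: "\<And>n k. 0 \<le> p n k" and psum: "\<And>n. (\<lambda>k. p n k) sums 1"
    and conv: "\<And>x. 0 \<le> x \<Longrightarrow> x \<le> 1 \<Longrightarrow> (\<lambda>n. \<Sum>k. p n k * x ^ k) \<longlonglongrightarrow> g x"
    and lower: "\<And>x. 0 \<le> x \<Longrightarrow> x < 1 \<Longrightarrow> 1 - C * (1 - x) \<le> g x"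
  shows "\<exists>a. (\<forall>k. 0 \<le> a k) \<and> a sums 1 \<and> (\<forall>k. (\<lambda>n. p n k) \<longlonglongrightarrow> a k)
             \<and> (\<forall>x. 0 \<le> x \<longrightarrow> x \<le> 1 \<longrightarrow> (\<lambda>k. a k * x ^ k) sums g x)"
proof -
  have pb: "\<bar>p n k\<bar> \<le> 1" for n k
    using p0[of n k] sum_le_one_if_sums_one[OF p0 psum, of "{k}"] by simp
  obtain d where d: "strict_mono d" "\<And>k. convergent (\<lambda>n. p (d n) k)"
    using bounded_double_sequence_diagonal[of p 1, OF pb] by blast
  define a where "a k = lim (\<lambda>n. p (d n) k)" for k
  have "(\<lambda>n. p (d n) k) \<longlonglongrightarrow> a k" for k
    using d(2)[of k] by (simp add: a_def convergent_LIMSEQ_iff)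
  note a = subsequential_limit_pmf[OF p0 psum conv d(1) this]
  text \<open>Every subsequence has a further subsequence converging to the same limit \<open>a\<close>,
    because the power series of any such limit is \<open>g\<close> on (0,1).\<close>
  have full: "(\<lambda>n. p n k) \<longlonglongrightarrow> a k" for k
  proof (rule subsubseq_tendsto)
    fix s :: "nat \<Rightarrow> nat" assume s: "strict_mono s"
    obtain r where r: "strict_mono r" "\<And>k'. convergent (\<lambda>n. p (s (r n)) k')"
      using bounded_double_sequence_diagonal[of "\<lambda>n. p (s n)" 1] pb by blast
    define b where "b k' = lim (\<lambda>n. p (s (r n)) k')" for k'
    have "(\<lambda>n. p ((s \<circ> r) n) k') \<longlonglongrightarrow> b k'" for k'
      using r(2)[of k'] by (simp add: b_def convergent_LIMSEQ_iff)
    note b = subsequential_limit_pmf[OF p0 psum conv strict_mono_o[OF s r(1)] this]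
    have "a k' - b k' = 0" for k'
    proof (rule power_series_zero_coefficients)
      fix x :: real assume x: "0 < x" "x < 1"
      have "(\<lambda>k. a k * x ^ k - b k * x ^ k) sums (g x - g x)"
        using x by (intro sums_diff a(4) b(4)) auto
      then show "(\<lambda>k. (a k - b k) * x ^ k) sums 0" by (simp add: algebra_simps)
    next
      fix k' show "\<bar>a k' - b k'\<bar> \<le> 1" using a(1)[of k'] b(1)[of k'] by auto
    qed
    then show "\<exists>r. strict_mono r \<and> ((\<lambda>n. p n k) \<circ> s \<circ> r) \<longlonglongrightarrow> a k"
      using r(1) b(1) \<open>(\<lambda>n. p ((s \<circ> r) n) k) \<longlonglongrightarrow> b k\<close> by (auto simp: o_def)
  qed
  have mass: "suminf a = 1"
    by (rule no_mass_loss[OF _ a(2,3) a(4) lower]) (use a(1) in auto)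
  have g1: "g 1 = 1"
    using conv[of 1] psum LIMSEQ_unique[OF _ tendsto_const] by (simp add: sums_iff)
  show ?thesis
  proof (intro exI conjI allI impI)
    show "a sums 1" using a(2) mass by (simp add: sums_iff)
    fix x :: real assume "0 \<le> x" "x \<le> 1"
    then show "(\<lambda>k. a k * x ^ k) sums g x"
      using a(4) \<open>a sums 1\<close> g1 by (cases "x = 1") auto
  qed (use a(1) full in auto)
qed

lemma (in prob_space) weak_conv_of_pgf_convergence:
  assumes X: "\<And>n. X n \<in> measurable M (count_space UNIV)"
    and conv: "\<And>x. 0 \<le> x \<Longrightarrow> x \<le> 1 \<Longrightarrow> (\<lambda>n. pgf M (X n) x) \<longlonglongrightarrow> g x"
    and lower: "\<And>x. 0 \<le> x \<Longrightarrow> x < 1 \<Longrightarrow> 1 - C * (1 - x) \<le> g x"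
  shows "\<exists>q :: nat pmf. weak_conv_m (\<lambda>n. distr M borel (\<lambda>\<omega>. real (X n \<omega>))) (distr (measure_pmf q) borel real)
           \<and> (\<forall>x\<in>{0..1}. pgf (measure_pmf q) (\<lambda>k. k) x = g x)"
proof -
  define p where "p n k = measure M {\<omega>\<in>space M. X n \<omega> = k}" for n k
  have p_sums: "(\<lambda>k. p n k * x ^ k) sums pgf M (X n) x" if "0 \<le> x" "x \<le> 1" for n x
    unfolding p_def by (rule pgf_sums[OF X that])
  have "(\<lambda>n. \<Sum>k. p n k * x ^ k) \<longlonglongrightarrow> g x" if "0 \<le> x" "x \<le> 1" for x
    using conv[OF that] p_sums[OF that] by (simp add: sums_iff)
  moreover have "(\<lambda>k. p n k) sums 1" for n
    using p_sums[of 1 n] by (simp add: pgf_one)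
  ultimately obtain a where a0: "\<And>k. 0 \<le> a k" and a1: "a sums 1"
    and a_lim: "\<And>k. (\<lambda>n. p n k) \<longlonglongrightarrow> a k"
    and a_g: "\<And>x. 0 \<le> x \<Longrightarrow> x \<le> 1 \<Longrightarrow> (\<lambda>k. a k * x ^ k) sums g x"
    using pgf_continuity[of p g C] lower by (auto simp: p_def)
  have "(\<integral>\<^sup>+k. ennreal (a k) \<partial>count_space UNIV) = 1"
    using a0 a1 by (simp add: nn_integral_count_space_nat suminf_ennreal2 sums_iff)
  then have pmf_eq_embed: "pmf (embed_pmf a) k = a k" for k
    by (rule pmf_embed_pmf[OF a0])
  define q where "q = embed_pmf a"
  have q: "measure (measure_pmf q) {k} = a k" for k
    by (simp add: q_def measure_pmf_single pmf_eq_embed)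
  have id_measurable: "(\<lambda>k::nat. k) \<in> measurable (measure_pmf q) (count_space UNIV)" by simp
  show ?thesis
  proof (intro exI conjI ballI)
    fix x :: real assume "x \<in> {0..1}"
    then show "pgf (measure_pmf q) (\<lambda>k. k) x = g x"
      using prob_space.pgf_sums[OF prob_space_measure_pmf[of q] id_measurable, of x] a_g[of x] q sums_unique2 by auto
  next
    show "weak_conv_m (\<lambda>n. distr M borel (\<lambda>\<omega>. real (X n \<omega>))) (distr (measure_pmf q) borel real)"
      unfolding weak_conv_m_def weak_conv_def
      using prob_space.cdf_nat[OF prob_space_measure_pmf[of q] id_measurable] cdf_nat[OF X] a_lim
      by (auto simp: q p_def intro!: tendsto_sum)
  qed
qed

section \<open>Convergence of the process\<close>

locale bpi_subcritical = bpi_process +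
  fixes rho :: "nat \<Rightarrow> real"
  assumes deriv: "\<And>n. n \<ge> 1 \<Longrightarrow> ((\<lambda>x. pgf M (xi n 1) x) has_real_derivative rho n) (at_left 1)"
    and rho_le: "\<And>n. n \<ge> 1 \<Longrightarrow> rho n \<le> 1"
    and imm_sum: "(\<Sum>n. \<integral>\<^sup>+\<omega>. ennreal (real (eps (Suc n) \<omega>)) \<partial>M) < \<infinity>"
begin

lemma G_monotone_above_diagonal: "1 \<le> k \<Longrightarrow> monotone_above_diagonal (G k)"
  unfolding monotone_above_diagonal_def
  using pgf_ge_diagonal[OF xi_measurable deriv rho_le] pgf_mono[OF xi_measurable]
    pgf_le_one[OF xi_measurable] by auto

lemma offspring_Gbar_limit:
  assumes j: "1 \<le> j" and x: "0 \<le> x" "x \<le> 1"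
  shows "(\<lambda>n. Gbar G j n x) \<longlonglongrightarrow> lim (\<lambda>n. Gbar G j n x)"
    and "0 \<le> Gbar G j n x" "x \<le> Gbar G j n x" "Gbar G j n x \<le> 1"
    and "Gbar G j n x \<le> lim (\<lambda>n. Gbar G j n x)" "lim (\<lambda>n. Gbar G j n x) \<le> 1"
proof -
  have G: "\<And>k. j \<le> k \<Longrightarrow> monotone_above_diagonal (G k)"
    using j by (intro G_monotone_above_diagonal) simp
  note D = monotone_above_diagonalD[OF Gbar_monotone_above_diagonal[OF G] x(1) order.refl x(2)]
  show "0 \<le> Gbar G j n x" "x \<le> Gbar G j n x" "Gbar G j n x \<le> 1"
    using D x by (auto intro: order.trans)
  show "(\<lambda>n. Gbar G j n x) \<longlonglongrightarrow> lim (\<lambda>n. Gbar G j n x)"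
    by (rule Gbar_limit(1)[OF G x])
  show "Gbar G j n x \<le> lim (\<lambda>n. Gbar G j n x)"
    by (rule Gbar_limit(2)[OF G x])
  show "lim (\<lambda>n. Gbar G j n x) \<le> 1"
    by (rule Gbar_limit(3)[OF G x])
qed

definition mean_imm :: "nat \<Rightarrow> real" where
  "mean_imm j = enn2real (\<integral>\<^sup>+\<omega>. ennreal (real (eps j \<omega>)) \<partial>M)"

lemma mean_imm_nonneg: "0 \<le> mean_imm j"
  by (simp add: mean_imm_def)

lemma mean_imm_summable: "summable mean_imm"
proof -
  have fin: "(\<integral>\<^sup>+\<omega>. ennreal (real (eps (Suc n) \<omega>)) \<partial>M) < \<infinity>" for n
    by (rule ennreal_suminf_lessD[OF imm_sum])
  have "summable (\<lambda>n. mean_imm (Suc n))"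
  proof (rule summable_suminf_not_top)
    have "(\<Sum>n. ennreal (mean_imm (Suc n))) = (\<Sum>n. \<integral>\<^sup>+\<omega>. ennreal (real (eps (Suc n) \<omega>)) \<partial>M)"
      unfolding mean_imm_def using fin by (intro suminf_cong) simp
    then show "(\<Sum>n. ennreal (mean_imm (Suc n))) \<noteq> \<top>" using imm_sum by simp
  qed (rule mean_imm_nonneg)
  then show ?thesis by (simp add: summable_Suc_iff)
qed

lemma H_lower_bound:
  assumes j: "1 \<le> j" and y: "0 \<le> y" "y \<le> 1"
  shows "1 - mean_imm j * (1 - y) \<le> H j y"
proof -
  have "(\<integral>\<^sup>+\<omega>. ennreal (real (eps j \<omega>)) \<partial>M) < \<infinity>"
    using ennreal_suminf_lessD[OF imm_sum, of "j - 1"] j by simp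
  then have "integrable M (\<lambda>\<omega>. real (eps j \<omega>))"
    by (intro integrableI_nonneg measurable_nat_fun[OF eps_measurable[OF j]]) auto
  moreover have "mean_imm j = (\<integral>\<omega>. real (eps j \<omega>) \<partial>M)"
    unfolding mean_imm_def
    by (rule integral_eq_nn_integral[symmetric]) (auto intro: measurable_nat_fun[OF eps_measurable[OF j]])
  ultimately show ?thesis
    using pgf_ge_mean_bound[OF eps_measurable[OF j] _ y] by simp
qed

lemma factor_bounds:
  assumes j: "1 \<le> j" and x: "0 \<le> x" "x \<le> 1"
  shows "0 \<le> H j (Gbar G (j + 1) n x)"
    and "H j (Gbar G (j + 1) n x) \<le> H j (lim (\<lambda>n. Gbar G (j + 1) n x))"
    and "H j (lim (\<lambda>n. Gbar G (j + 1) n x)) \<le> 1"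
    and "1 - mean_imm j * (1 - x) \<le> H j (Gbar G (j + 1) n x)"
    and "H j (Gbar G (j + 1) n x) \<le> 1"
proof -
  note y = offspring_Gbar_limit(2-6)[OF le_add2 x, of j]
  have "0 \<le> lim (\<lambda>n. Gbar G (j + 1) n x)" using y(1)[of 0] y(4)[of 0] by linarith
  show "0 \<le> H j (Gbar G (j + 1) n x)" using x y by (intro pgf_nonneg) auto
  show "H j (Gbar G (j + 1) n x) \<le> H j (lim (\<lambda>n. Gbar G (j + 1) n x))"
    using x y by (intro pgf_mono eps_measurable j) auto
  show "H j (lim (\<lambda>n. Gbar G (j + 1) n x)) \<le> 1"
    using x y \<open>0 \<le> lim _\<close> by (intro pgf_le_one eps_measurable j) auto
  have "mean_imm j * (1 - Gbar G (j + 1) n x) \<le> mean_imm j * (1 - x)"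
    using x y by (intro mult_left_mono mean_imm_nonneg) auto
  then show "1 - mean_imm j * (1 - x) \<le> H j (Gbar G (j + 1) n x)"
    using H_lower_bound[OF j, of "Gbar G (j + 1) n x"] x y by auto
  show "H j (Gbar G (j + 1) n x) \<le> 1"
    using x y by (intro pgf_le_one eps_measurable j) auto
qed

definition limit_pgf :: "real \<Rightarrow> real" where
  "limit_pgf x = (INF N. \<Prod>j=1..N. H j (lim (\<lambda>n. Gbar G (j + 1) n x)))"

lemma pgf_X_tendsto:
  assumes x: "0 \<le> x" "x \<le> 1"
  shows "(\<lambda>N. \<Prod>j=1..N. H j (lim (\<lambda>n. Gbar G (j + 1) n x))) \<longlonglongrightarrow> limit_pgf x"
    and "(\<lambda>n. pgf M (bpi xi eps n) x) \<longlonglongrightarrow> limit_pgf x"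
proof -
  have lim: "(\<lambda>n. H j (Gbar G (j + 1) n x)) \<longlonglongrightarrow> H j (lim (\<lambda>n. Gbar G (j + 1) n x))" if "1 \<le> j" for j
  proof (rule pgf_tendsto[OF eps_measurable[OF that]])
    fix n
    show "0 \<le> Gbar G (j + 1) n x" "Gbar G (j + 1) n x \<le> 1"
      using offspring_Gbar_limit(2,4)[OF le_add2 x, of j n] by simp_all
  qed (use offspring_Gbar_limit(1)[of "j + 1" x] x in auto)
  have t: "summable (\<lambda>j. mean_imm j * (1 - x))" "0 \<le> mean_imm j * (1 - x)" for j
    using mean_imm_summable x by (simp_all add: summable_mult2 mean_imm_nonneg)
  note limits = prod_limit[of "\<lambda>j n. H j (Gbar G (j + 1) n x)" "\<lambda>j. H j (lim (\<lambda>n. Gbar G (j + 1) n x))"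
      "\<lambda>j. mean_imm j * (1 - x)", OF _ _ t(2) t(1) lim]
  show "(\<lambda>N. \<Prod>j=1..N. H j (lim (\<lambda>n. Gbar G (j + 1) n x))) \<longlonglongrightarrow> limit_pgf x"
    using limits(1) factor_bounds[OF _ x] unfolding limit_pgf_def by blast
  show "(\<lambda>n. pgf M (bpi xi eps n) x) \<longlonglongrightarrow> limit_pgf x"
    using limits(2) factor_bounds[OF _ x] unfolding limit_pgf_def pgf_X_closed_form[OF x] by blast
qed

text \<open>The lower bound \<open>g(x) \<ge> 1 - (\<Sum>m\<^sub>j)(1 - x)\<close> which prevents escape of mass.\<close>
lemma limit_pgf_lower_bound:
  assumes x: "0 \<le> x" "x \<le> 1"
  shows "1 - suminf mean_imm * (1 - x) \<le> limit_pgf x"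
proof -
  have "1 - suminf mean_imm * (1 - x) \<le> pgf M (bpi xi eps n) x" for n
  proof -
    have "1 - suminf mean_imm * (1 - x) \<le> 1 - (\<Sum>j=1..n. mean_imm j) * (1 - x)"
      using x by (intro diff_left_mono mult_right_mono sum_le_suminf mean_imm_summable)
        (auto simp: mean_imm_nonneg)
    also have "\<dots> = 1 - (\<Sum>j=1..n. mean_imm j * (1 - x))"
      by (simp add: sum_distrib_right)
    also have "\<dots> \<le> (\<Prod>j=1..n. H j (Gbar G (j + 1) n x))"
      using factor_bounds[OF _ x] x by (intro prod_ge_one_minus_sum) (auto simp: mean_imm_nonneg)
    also have "\<dots> = pgf M (bpi xi eps n) x"
      by (rule pgf_X_closed_form[OF x, symmetric])
    finally show ?thesis .
  qed
  then show ?thesis by (intro LIMSEQ_le_const[OF pgf_X_tendsto(2)[OF x]]) auto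
qed

end

theorem theorem6:
  fixes M :: "'a measure"
    and xi :: "nat \<Rightarrow> nat \<Rightarrow> 'a \<Rightarrow> nat"
    and eps :: "nat \<Rightarrow> 'a \<Rightarrow> nat"
    and rho :: "nat \<Rightarrow> real"
    and r :: real
  assumes P: "prob_space M"
    and indep: "prob_space.indep_vars M (\<lambda>_. count_space UNIV)
        (\<lambda>i \<omega>. case i of Inl (n, j) \<Rightarrow> xi n j \<omega> | Inr n \<Rightarrow> eps n \<omega>)
        ({Inl (n, j) | n j. n \<ge> 1 \<and> j \<ge> 1} \<union> {Inr n | n. n \<ge> 1})"
    and ident: "\<And>n j. n \<ge> 1 \<Longrightarrow> j \<ge> 1 \<Longrightarrow>
        distr M (count_space UNIV) (xi n j) = distr M (count_space UNIV) (xi n 1)"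
    and deriv: "\<And>n. n \<ge> 1 \<Longrightarrow>
        ((\<lambda>x. pgf M (xi n 1) x) has_real_derivative rho n) (at_left 1)"
    and rho_le: "\<And>n. n \<ge> 1 \<Longrightarrow> rho n \<le> 1"
    and prod_lim: "(\<lambda>N. \<Prod>n=2..N. rho n) \<longlonglongrightarrow> r"
    and r_pos: "0 < r" and r_lt: "r < 1"
    and imm_sum: "(\<Sum>n. \<integral>\<^sup>+\<omega>. ennreal (real (eps (Suc n) \<omega>)) \<partial>M) < \<infinity>"
  shows "(\<forall>j. \<forall>x\<in>{0..1}.
            convergent (\<lambda>n. Gbar (\<lambda>k. pgf M (xi k 1)) (j + 1) n x))
       \<and> (\<exists>q :: nat pmf.
            weak_conv_m (\<lambda>n. distr M borel (\<lambda>\<omega>. real (bpi xi eps n \<omega>)))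
                        (distr (measure_pmf q) borel real)
          \<and> (\<forall>x\<in>{0..1}.
               (\<lambda>N. \<Prod>j=1..N. pgf M (eps j)
                    (lim (\<lambda>n. Gbar (\<lambda>k. pgf M (xi k 1)) (j + 1) n x)))
               \<longlonglongrightarrow> pgf (measure_pmf q) (\<lambda>k. k) x))"
proof -
  interpret bpi_subcritical M xi eps rho
    using P indep ident deriv rho_le imm_sum
    by (intro bpi_subcritical.intro bpi_process.intro bpi_process_axioms.intro
        bpi_subcritical_axioms.intro)
  obtain q :: "nat pmf"
    where weak: "weak_conv_m (\<lambda>n. distr M borel (\<lambda>\<omega>. real (bpi xi eps n \<omega>))) (distr (measure_pmf q) borel real)"
      and pgf_q: "\<forall>x\<in>{0..1}. pgf (measure_pmf q) (\<lambda>k. k) x = limit_pgf x"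
    using weak_conv_of_pgf_convergence[OF X_measurable pgf_X_tendsto(2) limit_pgf_lower_bound] by auto
  have "convergent (\<lambda>n. Gbar G (j + 1) n x)" if "x \<in> {0..1}" for j x
    using offspring_Gbar_limit(1)[of "j + 1" x] that by (auto simp: convergent_def)
  moreover have "(\<lambda>N. \<Prod>j=1..N. H j (lim (\<lambda>n. Gbar G (j + 1) n x))) \<longlonglongrightarrow> pgf (measure_pmf q) (\<lambda>k. k) x"
    if "x \<in> {0..1}" for x
    using pgf_X_tendsto(1)[of x] pgf_q that by auto
  ultimately show ?thesis using weak by blast
qed

end
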